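(* For any finite metric spaces $(X,d_X)$ and $(Y,d_Y)$, \[d_{\mathrm{B}}\left(\mathrm{dgm}_0(\mathcal{R}_\bullet(X,d_X)),\mathrm{dgm}_0(\mathcal{R}_\bullet(Y,d_Y))\right)\le d_{\mathrm{I}}\left(\beta_0^{(X,d_X)},\beta_0^{(Y,d_Y)}\right).\]
   Context: For a finite metric space $(X,d_X)$ and $\delta\in\mathbf{R}$, the Rips complex $\mathcal{R}_\delta(X,d_X)$ is the simplicial complex on $X$ whose simplices are the nonempty $\sigma\subseteq X$ with $d_X(x,x')\le\delta$ for all $x,x'\in\sigma$; $\mathcal{R}_\bullet(X,d_X)$ is the filtration $\delta\mapsto\mathcal{R}_\delta(X,d_X)$ with inclusions. $\mathrm{dgm}_0(\mathcal{R}_\bullet(X,d_X))$ is the persistence diagram (multiset of birth–death pairs $(b,d)$ with $b\le d$, $d$ possibly $+\infty$) of the persistence module $\delta\mapsto\mathrm{H}_0(\mathcal{R}_\delta(X,d_X))$ over a fixed field. The bottleneck distance between multisets $X_1,X_2$ of points of $\{(u_1,u_2)\in(\mathbf{R}\cup\{\pm\infty\})^2:u_1\le u_2\}$: a partial injection $\alpha:X_1\nrightarrow X_2$ is an $\varepsilon$-matching if $\|\mathbf{u}-\alpha(\mathbf{u})\|_\infty\le\varepsilon$ for matched $\mathbf{u}$ and $u_2-u_1\le2\varepsilon$ for every unmatched $\mathbf{u}=(u_1,u_2)$ in $X_1$ or $X_2$; $d_{\mathrm{B}}(X_1,X_2)$ is the infimum of $\varepsilon$ admitting an $\varepsilon$-matching.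 The Betti-0 function $\beta_0^{(X,d_X)}:\mathbf{R}_+\to\mathbf{Z}_+$ is $\delta\mapsto\dim\mathrm{H}_0(\mathcal{R}_\delta(X,d_X))$. For functions $F,G:\mathbf{R}_+\to\mathbf{Z}_+$, $d_{\mathrm{I}}(F,G):=\inf\{\varepsilon\ge0:\forall\delta\in\mathbf{R}_+,\ F(\delta)\ge G(\delta+\varepsilon),\ G(\delta)\ge F(\delta+\varepsilon)\}$. *)

theory Defs
  imports "HOL-Library.Extended_Real" "HOL-Library.Multiset" "HOL-Library.Function_Algebras"
begin

definition finite_metric_space :: "'a set \<Rightarrow> ('a \<Rightarrow> 'a \<Rightarrow> real) \<Rightarrow> bool" where
  "finite_metric_space X d \<longleftrightarrow> finite X \<and>
     (\<forall>x\<in>X. \<forall>y\<in>X. 0 \<le> d x y \<and> (d x y = 0 \<longleftrightarrow> x = y) \<and> d x y = d y x) \<and>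
     (\<forall>x\<in>X. \<forall>y\<in>X. \<forall>z\<in>X. d x z \<le> d x y + d y z)"

definition rips :: "'a set \<Rightarrow> ('a \<Rightarrow> 'a \<Rightarrow> real) \<Rightarrow> real \<Rightarrow> 'a set set" where
  "rips X d \<delta> = {\<sigma>. \<sigma> \<noteq> {} \<and> \<sigma> \<subseteq> X \<and> (\<forall>x\<in>\<sigma>. \<forall>x'\<in>\<sigma>. d x x' \<le> \<delta>)}"

text \<open>Chains are functions from vertices to the field 'k (finitely supported since
  complexes here are finite); the vector space structure is pointwise.\<close>

definition fscale :: "'k::field \<Rightarrow> ('a \<Rightarrow> 'k) \<Rightarrow> ('a \<Rightarrow> 'k)" where
  "fscale c f = (\<lambda>x. c * f x)"

definition vertices :: "'a set set \<Rightarrow> 'a set" where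
  "vertices K = {x. {x} \<in> K}"

definition basis_vec :: "'a \<Rightarrow> ('a \<Rightarrow> 'k::field)" where
  "basis_vec x = (\<lambda>z. if z = x then 1 else 0)"

definition chains0 :: "'k::field itself \<Rightarrow> 'a set set \<Rightarrow> ('a \<Rightarrow> 'k) set" where
  "chains0 _ K = {f. \<forall>x. x \<notin> vertices K \<longrightarrow> f x = 0}"

text \<open>0-boundaries B_0(K) = image of the boundary map on 1-chains.\<close>
definition boundaries0 :: "'k::field itself \<Rightarrow> 'a set set \<Rightarrow> ('a \<Rightarrow> 'k) set" where
  "boundaries0 _ K = module.span fscale
      {basis_vec y - basis_vec x | x y. {x, y} \<in> K \<and> x \<noteq> y}"

definition dimH0 :: "'k::field itself \<Rightarrow> 'a set set \<Rightarrow> nat" where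
  "dimH0 k K = vector_space.dim (fscale :: 'k \<Rightarrow> _) (chains0 k K)
             - vector_space.dim (fscale :: 'k \<Rightarrow> _) (boundaries0 k K)"

text \<open>Rank of the map H_0(K) \<rightarrow> H_0(L) induced by an inclusion K \<subseteq> L:
  its image is (C_0(K) + B_0(L)) / B_0(L).\<close>
definition rankH0 :: "'k::field itself \<Rightarrow> 'a set set \<Rightarrow> 'a set set \<Rightarrow> nat" where
  "rankH0 k K L = vector_space.dim (fscale :: 'k \<Rightarrow> _)
                     (module.span (fscale :: 'k \<Rightarrow> _) (chains0 k K \<union> boundaries0 k L))
                - vector_space.dim (fscale :: 'k \<Rightarrow> _) (boundaries0 k L)"

text \<open>The persistence diagram (barcode) is the multiset of intervals [b,d) of the
  interval decomposition of the persistence module; it is the unique finite multiset of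
  pairs b < d whose intervals reproduce the rank invariant:
  rank(H_0(R_s) \<rightarrow> H_0(R_t)) = #{(b,d) : [s,t] \<subseteq> [b,d)} for all s \<le> t.\<close>
definition dgm0 :: "'k::field itself \<Rightarrow> 'a set \<Rightarrow> ('a \<Rightarrow> 'a \<Rightarrow> real) \<Rightarrow> (ereal \<times> ereal) multiset" where
  "dgm0 k X d = (THE D. (\<forall>p \<in># D. fst p < snd p) \<and>
      (\<forall>s t::real. s \<le> t \<longrightarrow>
         rankH0 k (rips X d s) (rips X d t) =
           size (filter_mset (\<lambda>p. fst p \<le> ereal s \<and> ereal t < snd p) D)))"

text \<open>Coordinate distance on extended reals, with |\<infinity> - \<infinity>| = 0 convention.\<close>
definition cdist :: "ereal \<Rightarrow> ereal \<Rightarrow> ereal" where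
  "cdist a b = (if a = b then 0 else \<bar>a - b\<bar>)"

text \<open>A partial injection between multisets is given by a multiset M of matched pairs,
  whose first projection is a sub-multiset of X1 and second projection of X2.\<close>
definition eps_matching :: "(ereal \<times> ereal) multiset \<Rightarrow> (ereal \<times> ereal) multiset \<Rightarrow>
     ((ereal \<times> ereal) \<times> (ereal \<times> ereal)) multiset \<Rightarrow> real \<Rightarrow> bool" where
  "eps_matching X1 X2 M \<epsilon> \<longleftrightarrow>
     image_mset fst M \<subseteq># X1 \<and> image_mset snd M \<subseteq># X2 \<and>
     (\<forall>m \<in># M. cdist (fst (fst m)) (fst (snd m)) \<le> ereal \<epsilon> \<and>
                cdist (snd (fst m)) (snd (snd m)) \<le> ereal \<epsilon>) \<and>
     (\<forall>u \<in># X1 - image_mset fst M. cdist (snd u) (fst u) \<le> 2 * ereal \<epsilon>) \<and>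
     (\<forall>u \<in># X2 - image_mset snd M. cdist (snd u) (fst u) \<le> 2 * ereal \<epsilon>)"

definition bottleneck_dist :: "(ereal \<times> ereal) multiset \<Rightarrow> (ereal \<times> ereal) multiset \<Rightarrow> ereal" where
  "bottleneck_dist X1 X2 = Inf {ereal \<epsilon> | \<epsilon>. 0 \<le> \<epsilon> \<and> (\<exists>M. eps_matching X1 X2 M \<epsilon>)}"

definition betti0 :: "'k::field itself \<Rightarrow> 'a set \<Rightarrow> ('a \<Rightarrow> 'a \<Rightarrow> real) \<Rightarrow> real \<Rightarrow> nat" where
  "betti0 k X d \<delta> = dimH0 k (rips X d \<delta>)"

text \<open>Functions R_+ \<rightarrow> Z_+ are represented as real \<Rightarrow> nat, only evaluated on \<delta> \<ge> 0.\<close>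
definition interleaving_dist :: "(real \<Rightarrow> nat) \<Rightarrow> (real \<Rightarrow> nat) \<Rightarrow> ereal" where
  "interleaving_dist F G = Inf {ereal \<epsilon> | \<epsilon>. 0 \<le> \<epsilon> \<and>
      (\<forall>\<delta>\<ge>0. G (\<delta> + \<epsilon>) \<le> F \<delta> \<and> F (\<delta> + \<epsilon>) \<le> G \<delta>)}"

end

theory Submission
  imports Defs
begin

text \<open>Over a field, H_0 of the Rips complex at scale t \<ge> 0 has one dimension per connected
  component of the graph joining points at distance at most t, and every inclusion of scales
  induces a surjection on H_0, while below 0 the complex is empty. So the rank of
  H_0(R_s) \<rightarrow> H_0(R_t) is \<beta>_0(t) for 0 \<le> s \<le> t and 0 for s < 0. Fixing an order on the points,
  the elder rule lets each point die at the first scale at which it is connected to an older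
  point; counting the death times beyond t recovers \<beta>_0(t), so the diagram consists of the bars
  (0, death time). If the Betti functions are \<epsilon>-interleaved, the i-th largest death times of X
  and Y differ by at most \<epsilon>, and the death times that remain unmatched are at most \<epsilon>: pairing
  the sorted death times is an \<epsilon>-matching.\<close>

lemma sum_apply: "sum f A x = (\<Sum>a\<in>A. f a x)"
  by (induction A rule: infinite_finite_induct) auto

interpretation fs: vector_space "fscale :: 'k::field \<Rightarrow> ('a \<Rightarrow> 'k) \<Rightarrow> ('a \<Rightarrow> 'k)"
  by unfold_locales (auto simp: fscale_def algebra_simps)

lemma dim_eq_card_unit_coordinates:
  fixes b :: "'a \<Rightarrow> 'a \<Rightarrow> 'k::field"
  assumes "finite S"
    and unit: "\<And>x z. x \<in> S \<Longrightarrow> z \<in> S \<Longrightarrow> b x z = (if z = x then 1 else 0)"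
    and span: "fs.span (b ` S) = fs.span W"
  shows "fs.dim W = card S"
proof -
  have inj: "inj_on b S"
    by (rule inj_onI) (metis unit one_neq_zero)
  have "fs.independent (b ` S)"
  proof (rule fs.independent_if_scalars_zero)
    show "finite (b ` S)" using \<open>finite S\<close> by simp
  next
    fix c :: "('a \<Rightarrow> 'k) \<Rightarrow> 'k" and v assume sum0: "(\<Sum>u\<in>b ` S. fscale (c u) u) = 0" and "v \<in> b ` S"
    then obtain z where z: "z \<in> S" "v = b z" by auto
    have "0 = (\<Sum>u\<in>b ` S. c u * u z)"
      using fun_cong[OF sum0, of z] by (simp add: sum_apply fscale_def)
    also have "\<dots> = c v * v z"
      by (rule sum.remove[THEN trans]) (use \<open>finite S\<close> z unit in \<open>auto intro!: sum.neutral split: if_splits\<close>)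
    finally show "c v = 0" using z unit by simp
  qed
  then show ?thesis
    using fs.dim_eq_card[OF span] card_image[OF inj] by simp
qed

lemma chains0_subspace: "fs.subspace (chains0 TYPE('k::field) K :: ('a \<Rightarrow> 'k) set)"
  unfolding fs.subspace_def chains0_def fscale_def by auto

lemma dim_chains0:
  assumes "finite (vertices K)"
  shows "fs.dim (chains0 TYPE('k::field) K :: ('a \<Rightarrow> 'k) set) = card (vertices K)"
proof (rule dim_eq_card_unit_coordinates[where b = basis_vec])
  have "g \<in> fs.span (basis_vec ` vertices K)" if g: "g \<in> chains0 TYPE('k) K" for g :: "'a \<Rightarrow> 'k"
  proof -
    have "g = (\<Sum>x\<in>vertices K. fscale (g x) (basis_vec x))"
      using g assms by (auto simp: fun_eq_iff sum_apply fscale_def basis_vec_def chains0_def if_distrib[of "(*) _"] cong: if_cong)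
    also have "\<dots> \<in> fs.span (basis_vec ` vertices K)"
      by (intro fs.span_sum fs.span_scale fs.span_base) auto
    finally show ?thesis .
  qed
  moreover have "basis_vec ` vertices K \<subseteq> chains0 TYPE('k) K"
    by (auto simp: chains0_def basis_vec_def)
  ultimately show "fs.span (basis_vec ` vertices K) = fs.span (chains0 TYPE('k) K :: ('a \<Rightarrow> 'k) set)"
    by (metis fs.span_subspace chains0_subspace fs.span_eq_iff subsetI)
qed (use assms in \<open>auto simp: basis_vec_def\<close>)

section \<open>Connected components and their elders\<close>

definition oldest :: "('a \<times> 'a) set \<Rightarrow> ('a \<Rightarrow> nat) \<Rightarrow> 'a \<Rightarrow> 'a" where
  "oldest E f x = (ARG_MIN f y. (x, y) \<in> E\<^sup>*)"

definition elders :: "'a set \<Rightarrow> ('a \<times> 'a) set \<Rightarrow> ('a \<Rightarrow> nat) \<Rightarrow> 'a set" where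
  "elders V E f = {x \<in> V. \<forall>y. (x, y) \<in> E\<^sup>* \<longrightarrow> f x \<le> f y}"

definition edge_boundaries :: "('a \<times> 'a) set \<Rightarrow> ('a \<Rightarrow> 'k::field) set" where
  "edge_boundaries E = {basis_vec y - basis_vec x | x y. (x, y) \<in> E \<and> x \<noteq> y}"

lemma reachable_oldest: "(x, oldest E f x) \<in> E\<^sup>*"
  unfolding oldest_def by (rule arg_min_natI[where k = x]) simp

lemma oldest_le: "(x, y) \<in> E\<^sup>* \<Longrightarrow> f (oldest E f x) \<le> f y"
  unfolding oldest_def by (rule arg_min_nat_le)

lemma oldest_eq: "sym E \<Longrightarrow> (x, y) \<in> E\<^sup>* \<Longrightarrow> oldest E f y = oldest E f x"
  unfolding oldest_def
  by (metis (no_types, opaque_lifting) rtrancl_trans sym_rtrancl symD)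

lemma reachable_in: "(x, y) \<in> E\<^sup>* \<Longrightarrow> E \<subseteq> V \<times> V \<Longrightarrow> x \<in> V \<Longrightarrow> y \<in> V"
  by (induction rule: rtrancl_induct) auto

lemma elders_iff_oldest:
  assumes "E \<subseteq> V \<times> V" "inj_on f V" "x \<in> V"
  shows "x \<in> elders V E f \<longleftrightarrow> oldest E f x = x"
proof
  assume "x \<in> elders V E f"
  then have "f x \<le> f (oldest E f x)" using reachable_oldest[of x E f] by (auto simp: elders_def)
  moreover have "f (oldest E f x) \<le> f x" by (rule oldest_le) simp
  ultimately show "oldest E f x = x"
    using assms reachable_in[OF reachable_oldest] by (metis inj_onD order_antisym)
next
  assume "oldest E f x = x"
  then show "x \<in> elders V E f" using \<open>x \<in> V\<close> oldest_le[of x _ E f] by (auto simp: elders_def)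
qed

lemma oldest_in_elders:
  assumes "E \<subseteq> V \<times> V" "sym E" "inj_on f V" "x \<in> V"
  shows "oldest E f x \<in> elders V E f"
  using assms reachable_in[OF reachable_oldest] reachable_oldest
  by (metis elders_iff_oldest oldest_eq)

lemma reachable_in_span_edge_boundaries:
  "(x, y) \<in> E\<^sup>* \<Longrightarrow> (basis_vec y - basis_vec x :: 'a \<Rightarrow> 'k::field) \<in> fs.span (edge_boundaries E)"
proof (induction rule: rtrancl_induct)
  case base
  show ?case by (metis diff_self fs.span_zero)
next
  case (step y z)
  have "basis_vec z - basis_vec y \<in> (fs.span (edge_boundaries E) :: ('a \<Rightarrow> 'k) set)"
    using step.hyps(2) by (cases "y = z") (auto simp: fs.span_zero edge_boundaries_def intro!: fs.span_base)
  moreover have "basis_vec z - basis_vec x = (basis_vec z - basis_vec y) + (basis_vec y - basis_vec x :: 'a \<Rightarrow> 'k)"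
    by simp
  ultimately show ?case using fs.span_add[OF _ step.IH] by metis
qed

text \<open>The vectors x - oldest x, for x not an elder, form a basis of the boundaries.\<close>
lemma dim_edge_boundaries:
  assumes "finite V" "E \<subseteq> V \<times> V" "sym E" "inj_on f V"
  shows "fs.dim (edge_boundaries E :: ('a \<Rightarrow> 'k::field) set) = card V - card (elders V E f)"
proof -
  define b :: "'a \<Rightarrow> 'a \<Rightarrow> 'k" where "b x = basis_vec x - basis_vec (oldest E f x)" for x
  let ?S = "V - elders V E f"
  have b_elder: "b x = 0" if "x \<in> elders V E f" for x
    using that assms elders_iff_oldest[of E V f x] by (simp add: b_def elders_def)
  have "fs.dim (edge_boundaries E :: ('a \<Rightarrow> 'k) set) = card ?S"
  proof (rule dim_eq_card_unit_coordinates)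
    show "b x z = (if z = x then 1 else 0)" if "x \<in> ?S" "z \<in> ?S" for x z
      using that oldest_in_elders[OF assms(2-4), of x] by (auto simp: b_def basis_vec_def)
    have "g \<in> fs.span (b ` ?S)" if "g \<in> edge_boundaries E" for g
    proof -
      obtain x y where xy: "(x, y) \<in> E" "g = basis_vec y - basis_vec x"
        using \<open>g \<in> edge_boundaries E\<close> by (auto simp: edge_boundaries_def)
      have "g = b y - b x"
        using xy oldest_eq[OF assms(3) r_into_rtrancl[OF xy(1)], of f] by (simp add: b_def)
      moreover have "b v \<in> fs.span (b ` ?S)" if "v \<in> V" for v
        using that b_elder by (cases "v \<in> elders V E f") (auto simp: fs.span_zero intro: fs.span_base)
      ultimately show ?thesis using xy assms(2) by (auto intro: fs.span_diff)
    qed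
    moreover have "b ` ?S \<subseteq> fs.span (edge_boundaries E)"
      using fs.span_neg[OF reachable_in_span_edge_boundaries[OF reachable_oldest]]
      by (auto simp: b_def)
    ultimately show "fs.span (b ` ?S) = fs.span (edge_boundaries E)"
      by (simp add: fs.span_eq subsetI)
  qed (use assms in simp)
  also have "\<dots> = card V - card (elders V E f)"
    using assms(1) by (simp add: card_Diff_subset elders_def finite_subset)
  finally show ?thesis .
qed

section \<open>Multisets of death times\<close>

definition count_above :: "ereal multiset \<Rightarrow> real \<Rightarrow> nat" where
  "count_above A t = size {#a \<in># A. ereal t < a#}"

definition desc_list :: "ereal multiset \<Rightarrow> ereal list" where
  "desc_list A = rev (sorted_list_of_multiset A)"

lemma mset_desc_list [simp]: "mset (desc_list A) = A"
  by (simp add: desc_list_def)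

lemma length_desc_list [simp]: "length (desc_list A) = size A"
  by (metis mset_desc_list size_mset)

lemma nth_desc_list_in: "i < size A \<Longrightarrow> desc_list A ! i \<in># A"
  by (metis length_desc_list mset_desc_list nth_mem set_mset_mset)

lemma sorted_desc_list: "sorted_wrt (\<ge>) (desc_list A)"
  by (simp add: desc_list_def sorted_wrt_rev)

lemma less_length_filter_greater_iff:
  fixes xs :: "'a::linorder list"
  assumes "sorted_wrt (\<ge>) xs"
  shows "i < length (filter (\<lambda>a. t < a) xs) \<longleftrightarrow> i < length xs \<and> t < xs ! i"
  using assms
proof (induction xs arbitrary: i)
  case (Cons x xs)
  show ?case
  proof (cases "t < x")
    case True
    then show ?thesis using Cons by (cases i) auto
  next
    case False
    then have "\<not> t < y" if "y \<in> set xs" for y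
      using Cons.prems that by (auto dest: order.strict_trans2)
    then show ?thesis
      using False by (cases i) (auto simp: filter_empty_conv)
  qed
qed simp

lemma less_count_above_iff: "i < count_above A t \<longleftrightarrow> i < size A \<and> ereal t < desc_list A ! i"
proof -
  have "count_above A t = length (filter (\<lambda>a. ereal t < a) (desc_list A))"
    by (metis count_above_def mset_desc_list mset_filter size_mset)
  then show ?thesis
    using less_length_filter_greater_iff[OF sorted_desc_list] by simp
qed

lemma count_above_zero: "\<forall>a\<in>#A. 0 < a \<Longrightarrow> count_above A 0 = size A"
  by (simp add: count_above_def filter_mset_True filter_mset_cong zero_ereal_def)

lemma nth_desc_list_le_shift:
  assumes A: "\<forall>a\<in>#A. 0 < a" and "0 \<le> \<epsilon>"
    and shift: "\<And>t. 0 \<le> t \<Longrightarrow> count_above B (t + \<epsilon>) \<le> count_above A t"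
    and i: "i < size A" "i < size B"
  shows "desc_list B ! i \<le> desc_list A ! i + ereal \<epsilon>"
proof (rule ccontr)
  assume "\<not> ?thesis"
  then have gt: "desc_list A ! i + ereal \<epsilon> < desc_list B ! i" by simp
  then obtain r where r: "desc_list A ! i = ereal r"
    using A nth_desc_list_in[OF i(1)] by (cases "desc_list A ! i") auto
  have "0 \<le> r" using A nth_desc_list_in[OF i(1)] r by fastforce
  have "i < count_above B (r + \<epsilon>)"
    using less_count_above_iff i gt r by simp
  also have "\<dots> \<le> count_above A r"
    using shift \<open>0 \<le> r\<close> by simp
  finally show False
    using less_count_above_iff r by simp
qed

lemma count_above_inject:
  assumes A: "\<forall>a\<in>#A. 0 < a" and B: "\<forall>a\<in>#B. 0 < a"
    and eq: "\<And>t. 0 \<le> t \<Longrightarrow> count_above A t = count_above B t"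
  shows "A = B"
proof -
  have "size A = size B"
    using eq[of 0] count_above_zero[OF A] count_above_zero[OF B] by simp
  moreover have "desc_list A ! i = desc_list B ! i" if "i < size A" for i
    using nth_desc_list_le_shift[OF A, of 0 B i] nth_desc_list_le_shift[OF B, of 0 A i]
      eq that \<open>size A = size B\<close> by (simp add: order_antisym)
  ultimately have "desc_list A = desc_list B"
    by (auto intro: nth_equalityI)
  then show ?thesis
    by (metis mset_desc_list)
qed

lemma nth_desc_list_le_tail:
  assumes "count_above A \<epsilon> \<le> count_above B 0" and "size B \<le> j" "j < size A"
  shows "desc_list A ! j \<le> ereal \<epsilon>"
proof (rule ccontr)
  assume "\<not> ?thesis"
  then have "j < count_above A \<epsilon>" using less_count_above_iff assms(3) by simp
  also have "\<dots> \<le> size B"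
    using assms(1) unfolding count_above_def by (meson le_trans size_filter_mset_lesseq)
  finally show False using assms(2) by simp
qed

lemma size_filter_births_zero:
  "size {#p \<in># image_mset (Pair 0) A. fst p \<le> ereal s \<and> ereal t < snd p#}
     = (if 0 \<le> s then count_above A t else 0)"
  by (simp add: count_above_def filter_mset_image_mset)

lemma barcode_eq_births_zero:
  assumes D: "\<forall>p\<in>#D. fst p < snd p" and A: "\<forall>a\<in>#A. 0 < a"
    and rank: "\<And>s t. s \<le> t \<Longrightarrow> (if 0 \<le> s then count_above A t else 0)
                                   = size {#p \<in># D. fst p \<le> ereal s \<and> ereal t < snd p#}"
  shows "D = image_mset (Pair 0) A"
proof -
  txt \<open>A bar born before 0 would be alive at some negative scale, where the rank is 0; a bar
    born at b > 0 would be alive over [b, b] but not over [0, b], whose ranks agree.\<close>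
  have birth: "fst p = 0" if "p \<in># D" for p
  proof (cases "fst p" "0 :: ereal" rule: linorder_cases)
    case less
    with D that obtain z where z: "fst p < ereal z" "ereal z < 0" "ereal z < snd p"
      by (metis ereal_dense2 min_less_iff_conj)
    then have "p \<in># {#q \<in># D. fst q \<le> ereal z \<and> ereal z < snd q#}"
      using that by simp
    then have "size {#q \<in># D. fst q \<le> ereal z \<and> ereal z < snd q#} \<noteq> 0"
      by (metis empty_iff set_mset_empty size_eq_0_iff_empty)
    moreover have "size {#q \<in># D. fst q \<le> ereal z \<and> ereal z < snd q#} = 0"
      using rank[of z z] z(2) by simp
    ultimately show ?thesis
      by contradiction
  next
    case greater
    with D that obtain b where b: "fst p = ereal b" "0 < b"
      by (cases "fst p") auto
    let ?alive = "\<lambda>s. {#q \<in># D. fst q \<le> ereal s \<and> ereal b < snd q#}"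
    have alive_mono: "?alive 0 \<subseteq># ?alive b"
      using b(2) by (intro filter_mset_mono_strong) (auto intro: order_trans)
    have "p \<in># ?alive b"
      using that b(1) D[rule_format, OF that] by simp
    moreover have "p \<notin># ?alive 0"
      using b by simp
    ultimately have "?alive 0 \<noteq> ?alive b"
      by metis
    with alive_mono have "size (?alive 0) < size (?alive b)"
      by (simp add: mset_subset_size subset_mset.le_neq_trans)
    with rank[of 0 b] rank[of b b] b(2) show ?thesis
      by simp
  qed simp
  have D_eq: "D = image_mset (Pair 0) (image_mset snd D)"
    using birth by (induction D) (auto simp: prod_eq_iff)
  moreover have "image_mset snd D = A"
  proof (rule count_above_inject)
    show "\<forall>a\<in>#image_mset snd D. 0 < a"
      using D birth by fastforce
    show "count_above (image_mset snd D) t = count_above A t" if "0 \<le> t" for t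
      using rank[of 0 t] that size_filter_births_zero[of 0 t "image_mset snd D"] D_eq by simp
  qed (rule A)
  ultimately show ?thesis
    by simp
qed

section \<open>Matchings of bars born at 0\<close>

lemma eps_matching_zip:
  assumes matched: "\<And>i. i < length xs \<Longrightarrow> i < length ys \<Longrightarrow>
      cdist (fst (xs ! i)) (fst (ys ! i)) \<le> ereal \<epsilon> \<and> cdist (snd (xs ! i)) (snd (ys ! i)) \<le> ereal \<epsilon>"
    and unmatched1: "\<And>u. u \<in> set (drop (length ys) xs) \<Longrightarrow> cdist (snd u) (fst u) \<le> 2 * ereal \<epsilon>"
    and unmatched2: "\<And>u. u \<in> set (drop (length xs) ys) \<Longrightarrow> cdist (snd u) (fst u) \<le> 2 * ereal \<epsilon>"
  shows "eps_matching (mset xs) (mset ys) (mset (zip xs ys)) \<epsilon>"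
proof -
  have take_drop: "mset (take n zs) \<subseteq># mset zs" "mset zs - mset (take n zs) = mset (drop n zs)"
    for n and zs :: "(ereal \<times> ereal) list"
    by (metis append_take_drop_id mset_append mset_subset_eq_add_left,
        metis add_diff_cancel_left' append_take_drop_id mset_append)
  have "image_mset fst (mset (zip xs ys)) = mset (take (length ys) xs)"
    by (simp flip: mset_map add: map_fst_zip_take min_def)
  moreover have "image_mset snd (mset (zip xs ys)) = mset (take (length xs) ys)"
    by (simp flip: mset_map add: map_snd_zip_take min_def)
  moreover have "\<forall>m\<in>#mset (zip xs ys). cdist (fst (fst m)) (fst (snd m)) \<le> ereal \<epsilon> \<and>
      cdist (snd (fst m)) (snd (snd m)) \<le> ereal \<epsilon>"
  proof
    fix m assume "m \<in># mset (zip xs ys)"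
    then obtain i where "i < length xs" "i < length ys" "m = (xs ! i, ys ! i)"
      by (auto simp: set_zip)
    then show "cdist (fst (fst m)) (fst (snd m)) \<le> ereal \<epsilon> \<and> cdist (snd (fst m)) (snd (snd m)) \<le> ereal \<epsilon>"
      using matched by simp
  qed
  ultimately show ?thesis
    unfolding eps_matching_def using take_drop unmatched1 unmatched2 by simp
qed

lemma cdist_le:
  assumes "a \<le> b + ereal e" "b \<le> a + ereal e" "0 \<le> e"
  shows "cdist a b \<le> ereal e"
  using assms unfolding cdist_def by (cases a; cases b) auto

lemma eps_matching_births_zero:
  assumes A: "\<forall>a\<in>#A. 0 < a" and B: "\<forall>b\<in>#B. 0 < b" and "0 \<le> \<epsilon>"
    and AB: "\<And>t. 0 \<le> t \<Longrightarrow> count_above A (t + \<epsilon>) \<le> count_above B t"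
    and BA: "\<And>t. 0 \<le> t \<Longrightarrow> count_above B (t + \<epsilon>) \<le> count_above A t"
  shows "eps_matching (image_mset (Pair 0) A) (image_mset (Pair 0) B)
           (mset (zip (map (Pair 0) (desc_list A)) (map (Pair 0) (desc_list B)))) \<epsilon>"
proof -
  have tail: "cdist (snd u) (fst u) \<le> 2 * ereal \<epsilon>"
    if C: "\<forall>c\<in>#C. 0 < c" and CD: "count_above C \<epsilon> \<le> count_above D' 0"
      and u: "u \<in> set (drop (size D') (map (Pair 0) (desc_list C)))" for C D' u
  proof -
    from u obtain i where i: "i < size C - size D'" "u = (0, desc_list C ! (size D' + i))"
      by (auto simp: in_set_conv_nth)
    then have "size D' + i < size C"
      by simp
    then have "desc_list C ! (size D' + i) \<le> ereal \<epsilon>" "0 < desc_list C ! (size D' + i)"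
      using nth_desc_list_le_tail[OF CD le_add1] C nth_desc_list_in by auto
    then show ?thesis
      using i(2) \<open>0 \<le> \<epsilon>\<close> unfolding cdist_def by (cases "desc_list C ! (size D' + i)") auto
  qed
  let ?xs = "map (Pair 0) (desc_list A)" and ?ys = "map (Pair 0) (desc_list B)"
  have "eps_matching (mset ?xs) (mset ?ys) (mset (zip ?xs ?ys)) \<epsilon>"
  proof (rule eps_matching_zip)
    fix i assume "i < length ?xs" "i < length ?ys"
    then have i: "i < size A" "i < size B" by simp_all
    have "cdist (desc_list A ! i) (desc_list B ! i) \<le> ereal \<epsilon>"
      using nth_desc_list_le_shift[OF A \<open>0 \<le> \<epsilon>\<close> BA i] nth_desc_list_le_shift[OF B \<open>0 \<le> \<epsilon>\<close> AB i(2,1)]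
      by (intro cdist_le \<open>0 \<le> \<epsilon>\<close>) (simp_all add: add.commute)
    then show "cdist (fst (?xs ! i)) (fst (?ys ! i)) \<le> ereal \<epsilon> \<and> cdist (snd (?xs ! i)) (snd (?ys ! i)) \<le> ereal \<epsilon>"
      using i \<open>0 \<le> \<epsilon>\<close> by (simp add: cdist_def)
  next
    show "cdist (snd u) (fst u) \<le> 2 * ereal \<epsilon>" if "u \<in> set (drop (length ?ys) ?xs)" for u
      using tail[OF A _, of B] AB[of 0] that by simp
    show "cdist (snd u) (fst u) \<le> 2 * ereal \<epsilon>" if "u \<in> set (drop (length ?xs) ?ys)" for u
      using tail[OF B _, of A] BA[of 0] that by simp
  qed
  then show ?thesis
    by simp
qed

lemma bottleneck_dist_births_zero_le:
  assumes A: "\<forall>a\<in>#A. 0 < a" and B: "\<forall>b\<in>#B. 0 < b"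
  shows "bottleneck_dist (image_mset (Pair 0) A) (image_mset (Pair 0) B)
           \<le> interleaving_dist (count_above A) (count_above B)"
  unfolding interleaving_dist_def
proof (rule Inf_greatest, clarify)
  fix \<epsilon> :: real
  assume "0 \<le> \<epsilon>" and "\<forall>\<delta>\<ge>0. count_above B (\<delta> + \<epsilon>) \<le> count_above A \<delta> \<and>
                               count_above A (\<delta> + \<epsilon>) \<le> count_above B \<delta>"
  then have "eps_matching (image_mset (Pair 0) A) (image_mset (Pair 0) B)
      (mset (zip (map (Pair 0) (desc_list A)) (map (Pair 0) (desc_list B)))) \<epsilon>"
    by (intro eps_matching_births_zero A B) auto
  with \<open>0 \<le> \<epsilon>\<close> show "bottleneck_dist (image_mset (Pair 0) A) (image_mset (Pair 0) B) \<le> ereal \<epsilon>"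
    unfolding bottleneck_dist_def by (blast intro: Inf_lower)
qed

lemma interleaving_dist_cong:
  assumes "\<And>t. 0 \<le> t \<Longrightarrow> F t = F' t" and "\<And>t. 0 \<le> t \<Longrightarrow> G t = G' t"
  shows "interleaving_dist F G = interleaving_dist F' G'"
proof -
  have "(\<forall>\<delta>\<ge>0. G (\<delta> + \<epsilon>) \<le> F \<delta> \<and> F (\<delta> + \<epsilon>) \<le> G \<delta>)
      \<longleftrightarrow> (\<forall>\<delta>\<ge>0. G' (\<delta> + \<epsilon>) \<le> F' \<delta> \<and> F' (\<delta> + \<epsilon>) \<le> G' \<delta>)" if "0 \<le> \<epsilon>" for \<epsilon>
    using assms that by simp
  then show ?thesis
    unfolding interleaving_dist_def by (metis (no_types, lifting))
qed

definition rips_edges :: "'a set \<Rightarrow> ('a \<Rightarrow> 'a \<Rightarrow> real) \<Rightarrow> real \<Rightarrow> ('a \<times> 'a) set" where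
  "rips_edges X d t = {(x, y). x \<in> X \<and> y \<in> X \<and> d x y \<le> t}"

lemma rips_edges_mono: "s \<le> t \<Longrightarrow> rips_edges X d s \<subseteq> rips_edges X d t"
  by (auto simp: rips_edges_def)

text \<open>The elder rule: x dies at the first distance at which it is joined to a point older
  under f. A point that is oldest in all of X never dies: Inf of the empty set is \<infinity>.\<close>
definition death_time :: "'a set \<Rightarrow> ('a \<Rightarrow> 'a \<Rightarrow> real) \<Rightarrow> ('a \<Rightarrow> nat) \<Rightarrow> 'a \<Rightarrow> ereal" where
  "death_time X d f x =
     Inf (ereal ` {v \<in> case_prod d ` (X \<times> X). x \<notin> elders X (rips_edges X d v) f})"

lemma elders_antimono:
  "s \<le> t \<Longrightarrow> x \<in> elders X (rips_edges X d t) f \<Longrightarrow> x \<in> elders X (rips_edges X d s) f"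
  using rtrancl_mono[OF rips_edges_mono[of s t X d]] by (auto simp: elders_def)

context
  fixes X :: "'a set" and d :: "'a \<Rightarrow> 'a \<Rightarrow> real"
  assumes metric: "finite_metric_space X d"
begin

lemma finite_points: "finite X"
  using metric by (simp add: finite_metric_space_def)

lemma metric_self: "x \<in> X \<Longrightarrow> d x x = 0"
  using metric by (simp add: finite_metric_space_def)

lemma metric_commute: "x \<in> X \<Longrightarrow> y \<in> X \<Longrightarrow> d x y = d y x"
  using metric by (simp add: finite_metric_space_def)

lemma metric_pos: "x \<in> X \<Longrightarrow> y \<in> X \<Longrightarrow> x \<noteq> y \<Longrightarrow> 0 < d x y"
  using metric unfolding finite_metric_space_def by (metis order_le_less)

lemma vertices_rips: "vertices (rips X d t) = (if 0 \<le> t then X else {})"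
  by (auto simp: vertices_def rips_def metric_self)

lemma sym_rips_edges: "sym (rips_edges X d t)"
  by (auto simp: rips_edges_def sym_def metric_commute)

lemma boundaries0_rips:
  assumes "0 \<le> t"
  shows "boundaries0 TYPE('k::field) (rips X d t) = fs.span (edge_boundaries (rips_edges X d t))"
proof -
  have "{x, y} \<in> rips X d t \<longleftrightarrow> (x, y) \<in> rips_edges X d t" for x y
    using assms by (auto simp: rips_def rips_edges_def metric_self metric_commute)
  then show ?thesis
    unfolding boundaries0_def edge_boundaries_def by simp
qed

lemma dimH0_rips:
  assumes "0 \<le> t" and "inj_on f X"
  shows "dimH0 TYPE('k::field) (rips X d t) = card (elders X (rips_edges X d t) f)"
proof -
  have "rips_edges X d t \<subseteq> X \<times> X"
    by (auto simp: rips_edges_def)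
  then have "fs.dim (boundaries0 TYPE('k) (rips X d t) :: ('a \<Rightarrow> 'k) set)
      = card X - card (elders X (rips_edges X d t) f)"
    unfolding boundaries0_rips[OF assms(1)] fs.dim_span
    by (rule dim_edge_boundaries[OF finite_points _ sym_rips_edges assms(2)])
  moreover have "fs.dim (chains0 TYPE('k) (rips X d t) :: ('a \<Rightarrow> 'k) set) = card X"
    using dim_chains0[of "rips X d t", where 'k = 'k] finite_points assms(1) by (simp add: vertices_rips)
  moreover have "card (elders X (rips_edges X d t) f) \<le> card X"
    using finite_points by (auto simp: elders_def intro: card_mono)
  ultimately show ?thesis
    by (simp add: dimH0_def)
qed

lemma rankH0_rips:
  assumes "s \<le> t"
  shows "rankH0 TYPE('k::field) (rips X d s) (rips X d t) = (if 0 \<le> s then betti0 TYPE('k) X d t else 0)"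
proof (cases "0 \<le> s")
  case True
  have "edge_boundaries (rips_edges X d t) \<subseteq> (chains0 TYPE('k) (rips X d t) :: ('a \<Rightarrow> 'k) set)"
    using True assms
    by (auto simp: edge_boundaries_def rips_edges_def chains0_def vertices_rips basis_vec_def)
  then have "boundaries0 TYPE('k) (rips X d t) \<subseteq> (chains0 TYPE('k) (rips X d t) :: ('a \<Rightarrow> 'k) set)"
    using True assms by (simp add: boundaries0_rips fs.span_minimal chains0_subspace)
  moreover have "chains0 TYPE('k) (rips X d s) = (chains0 TYPE('k) (rips X d t) :: ('a \<Rightarrow> 'k) set)"
    using True assms by (simp add: chains0_def vertices_rips)
  ultimately have "chains0 TYPE('k) (rips X d s) \<union> boundaries0 TYPE('k) (rips X d t)
      = (chains0 TYPE('k) (rips X d t) :: ('a \<Rightarrow> 'k) set)"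
    by blast
  then show ?thesis
    using True by (simp only: rankH0_def dimH0_def betti0_def fs.dim_span if_True)
next
  case False
  then have "chains0 TYPE('k) (rips X d s) = ({0} :: ('a \<Rightarrow> 'k) set)"
    by (auto simp: chains0_def vertices_rips)
  then show ?thesis
    using False unfolding rankH0_def by (simp add: fs.dim_span)
qed

lemma finite_distances: "finite (case_prod d ` (X \<times> X))"
  using finite_points by simp

lemma rips_edges_eq_at_distance:
  assumes "0 \<le> t" and "x \<in> X"
  obtains v where "v \<in> case_prod d ` (X \<times> X)" "v \<le> t" "rips_edges X d v = rips_edges X d t"
proof -
  let ?S = "{v \<in> case_prod d ` (X \<times> X). v \<le> t}"
  have "finite ?S"
    by (rule finite_subset[OF _ finite_distances]) blast
  have "d x x \<in> case_prod d ` (X \<times> X)"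
    by (rule image_eqI[where x = "(x, x)"]) (simp_all add: assms(2))
  then have "d x x \<in> ?S"
    using assms metric_self by simp
  then have "?S \<noteq> {}"
    by blast
  with \<open>finite ?S\<close> have max: "Max ?S \<in> case_prod d ` (X \<times> X)" "Max ?S \<le> t"
    using Max_in by auto
  have "rips_edges X d t \<subseteq> rips_edges X d (Max ?S)"
  proof (clarsimp simp: rips_edges_def)
    fix y z assume "y \<in> X" "z \<in> X" "d y z \<le> t"
    then show "d y z \<le> Max ?S"
      using \<open>finite ?S\<close> by (intro Max_ge) auto
  qed
  with rips_edges_mono[OF max(2)] have "rips_edges X d (Max ?S) = rips_edges X d t"
    by (rule subset_antisym)
  with max show ?thesis
    by (rule that)
qed

lemma less_death_time_iff:
  assumes "0 \<le> t" and "x \<in> X"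
  shows "ereal t < death_time X d f x \<longleftrightarrow> x \<in> elders X (rips_edges X d t) f"
proof -
  let ?S = "{v \<in> case_prod d ` (X \<times> X). x \<notin> elders X (rips_edges X d v) f}"
  have "finite ?S"
    by (rule finite_subset[OF _ finite_distances]) blast
  have "ereal t < Inf (ereal ` ?S) \<longleftrightarrow> (\<forall>v\<in>?S. t < v)"
  proof (cases "?S = {}")
    case False
    then show ?thesis
      using \<open>finite ?S\<close> finite_less_Inf_iff[of "ereal ` ?S" "ereal t"] by simp
  next
    case True
    show ?thesis unfolding True by (simp add: top_ereal_def)
  qed
  then have "ereal t < death_time X d f x \<longleftrightarrow> (\<forall>v\<in>?S. t < v)"
    by (simp only: death_time_def)
  also have "\<dots> \<longleftrightarrow> x \<in> elders X (rips_edges X d t) f"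
  proof
    assume later: "\<forall>v\<in>?S. t < v"
    obtain v where v: "v \<in> case_prod d ` (X \<times> X)" "v \<le> t" "rips_edges X d v = rips_edges X d t"
      by (rule rips_edges_eq_at_distance[OF assms])
    have "x \<in> elders X (rips_edges X d v) f"
    proof (rule ccontr)
      assume "x \<notin> elders X (rips_edges X d v) f"
      with v(1) have "v \<in> ?S" by simp
      with later v(2) show False by auto
    qed
    with v(3) show "x \<in> elders X (rips_edges X d t) f"
      by simp
  next
    assume elder: "x \<in> elders X (rips_edges X d t) f"
    show "\<forall>v\<in>?S. t < v"
    proof (rule ballI, rule ccontr)
      fix v assume "v \<in> ?S" "\<not> t < v"
      then show False
        using elders_antimono[of v t x X d f] elder by simp
    qed
  qed
  finally show ?thesis .
qed

lemma death_time_pos: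
  assumes "x \<in> X"
  shows "0 < death_time X d f x"
proof -
  have "y = x" if "(x, y) \<in> (rips_edges X d 0)\<^sup>*" for y
    using that by induction (auto simp: rips_edges_def dest: metric_pos)
  then have "x \<in> elders X (rips_edges X d 0) f"
    using assms by (auto simp: elders_def)
  then show ?thesis
    using less_death_time_iff[of 0 x f] assms by (simp add: zero_ereal_def)
qed

lemma betti0_rips_eq_count_above:
  obtains A where "\<forall>a\<in>#A. 0 < a" "\<And>t. 0 \<le> t \<Longrightarrow> betti0 TYPE('k::field) X d t = count_above A t"
proof -
  obtain f :: "'a \<Rightarrow> nat" where f: "inj_on f X"
    by (metis finite_imp_inj_to_nat_seg finite_points)
  define A where "A = image_mset (death_time X d f) (mset_set X)"
  have "\<forall>a\<in>#A. 0 < a"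
    using finite_points death_time_pos by (auto simp: A_def)
  moreover have "betti0 TYPE('k) X d t = count_above A t" if "0 \<le> t" for t
  proof -
    have "count_above A t = card {x \<in> X. ereal t < death_time X d f x}"
      using finite_points by (simp add: A_def count_above_def filter_mset_image_mset)
    also have "{x \<in> X. ereal t < death_time X d f x} = elders X (rips_edges X d t) f"
      using less_death_time_iff[OF that] by (auto simp: elders_def)
    finally show ?thesis
      using dimH0_rips[OF that f] by (simp add: betti0_def)
  qed
  ultimately show ?thesis
    by (rule that)
qed

lemma dgm0_rips_eq_births_zero:
  assumes A: "\<forall>a\<in>#A. 0 < a"
    and betti: "\<And>t. 0 \<le> t \<Longrightarrow> betti0 TYPE('k::field) X d t = count_above A t"
  shows "dgm0 TYPE('k) X d = image_mset (Pair 0) A"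
proof -
  have "rankH0 TYPE('k) (rips X d s) (rips X d t) = (if 0 \<le> s then count_above A t else 0)"
    if "s \<le> t" for s t
    using rankH0_rips[OF that, where 'k = 'k] betti[of t] that by simp
  then have "dgm0 TYPE('k) X d = (THE D. (\<forall>p\<in>#D. fst p < snd p) \<and>
      (\<forall>s t::real. s \<le> t \<longrightarrow> (if 0 \<le> s then count_above A t else 0) =
         size {#p \<in># D. fst p \<le> ereal s \<and> ereal t < snd p#}))"
    unfolding dgm0_def by simp
  also have "\<dots> = image_mset (Pair 0) A"
    using A barcode_eq_births_zero[of _ A] size_filter_births_zero[symmetric]
    by (intro the_equality) auto
  finally show ?thesis .
qed

end

theorem theorem4p14:
  fixes X :: "'a set" and dX :: "'a \<Rightarrow> 'a \<Rightarrow> real"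
    and Y :: "'b set" and dY :: "'b \<Rightarrow> 'b \<Rightarrow> real"
  assumes "finite_metric_space X dX" and "finite_metric_space Y dY"
  shows "bottleneck_dist (dgm0 TYPE('k::field) X dX) (dgm0 TYPE('k) Y dY)
           \<le> interleaving_dist (betti0 TYPE('k) X dX) (betti0 TYPE('k) Y dY)"
proof -
  obtain A where A: "\<forall>a\<in>#A. 0 < a" "\<And>t. 0 \<le> t \<Longrightarrow> betti0 TYPE('k) X dX t = count_above A t"
    using betti0_rips_eq_count_above[OF assms(1), where 'k = 'k] by blast
  obtain B where B: "\<forall>b\<in>#B. 0 < b" "\<And>t. 0 \<le> t \<Longrightarrow> betti0 TYPE('k) Y dY t = count_above B t"
    using betti0_rips_eq_count_above[OF assms(2), where 'k = 'k] by blast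
  have "bottleneck_dist (dgm0 TYPE('k) X dX) (dgm0 TYPE('k) Y dY)
      = bottleneck_dist (image_mset (Pair 0) A) (image_mset (Pair 0) B)"
    using dgm0_rips_eq_births_zero[OF assms(1) A] dgm0_rips_eq_births_zero[OF assms(2) B] by simp
  also have "\<dots> \<le> interleaving_dist (count_above A) (count_above B)"
    by (rule bottleneck_dist_births_zero_le[OF A(1) B(1)])
  also have "\<dots> = interleaving_dist (betti0 TYPE('k) X dX) (betti0 TYPE('k) Y dY)"
    using A(2) B(2) by (intro interleaving_dist_cong) simp_all
  finally show ?thesis .
qed

end
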